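(* There is a universal constant $\alpha>0$ such that the following holds. Let $1/2<r\le1$ and $\beta_0,\beta_1>0$ with $\beta_0+\beta_1\zeta(2r)=1$, and let \[ K_1(x,y)=\beta_0+\beta_1\sum_{k=1}^\infty k^{-2r}\cos(2\pi k(x-y)),\qquad x,y\in\mathbb{T}. \] Then $K_1(x,x)=1$ for all $x\in\mathbb{T}$ and \[ K_1(x,y)\ge1-\alpha\,d_{\mathbb{T}}(x,y)^{2r-1}\quad\text{for all }x,y\in\mathbb{T}\text{ with }d_{\mathbb{T}}(x,y)\le\frac{1}{\sqrt2\,\pi}, \] i.e. the local lower bound $K_1(x,y)\ge1-\alpha\,d_{\mathbb{T}}(x,y)^p$ holds with $p=2r-1$ and $R_0=1/(\sqrt2\,\pi)$.
   Context: $\mathbb{T}=[0,1)$ is the one-dimensional torus with metric $d_{\mathbb{T}}(x,y):=\min_{k\in\{-1,0,1\}}|x-y+k|$; $\zeta$ is the Riemann zeta function. $K_1$ is the reproducing kernel of the one-dimensional Korobov space of smoothness $r$. *)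

theory Defs
  imports "HOL-Analysis.Analysis"
begin

definition zeta_real :: "real \<Rightarrow> real" where
  "zeta_real s = (\<Sum>k. 1 / (real (Suc k)) powr s)"

definition torus :: "real set" where
  "torus = {0..<1}"

definition dT :: "real \<Rightarrow> real \<Rightarrow> real" where
  "dT x y = Min {\<bar>x - y + of_int k\<bar> | k::int. k \<in> {-1, 0, 1}}"

definition K1 :: "real \<Rightarrow> real \<Rightarrow> real \<Rightarrow> real \<Rightarrow> real \<Rightarrow> real" where
  "K1 r \<beta>0 \<beta>1 x y =
     \<beta>0 + \<beta>1 * (\<Sum>k. (real (Suc k)) powr (-2*r) * cos (2 * pi * real (Suc k) * (x - y)))"

end

theory Submission
  imports Defs
begin

text \<open>Put \<open>s = 2r \<in> (1,2]\<close> and \<open>d = dT x y\<close>. Periodicity and evenness of cosine give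
  \<open>K1(x,y) = \<beta>0 + \<beta>1 \<zeta>(s) - \<beta>1 \<Sum>\<^sub>k k powr -s (1 - cos (2\<pi>kd))\<close>, where \<open>\<beta>0 + \<beta>1 \<zeta>(s) = 1\<close>.
  Comparing \<open>\<zeta>(s)\<close> with the integral of \<open>t powr -s\<close> over \<open>[1,\<infinity>)\<close> gives \<open>\<zeta>(s) \<ge> 1/(s-1)\<close>,
  hence \<open>\<beta>1 < s - 1 \<le> 1\<close>. Split the series at \<open>N = \<lfloor>1/d\<rfloor>\<close>: on \<open>k \<le> N\<close> the bound
  \<open>1 - cos t \<le> t\<^sup>2/2\<close> gives at most \<open>2\<pi>\<^sup>2 d\<^sup>2 N powr (3-s) \<le> 2\<pi>\<^sup>2 d powr (s-1)\<close>; on \<open>k > N\<close> the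
  bound \<open>1 - cos t \<le> 2\<close> gives at most \<open>2 N powr (1-s) / (s-1) \<le> 4 d powr (s-1) / (s-1)\<close>, and the
  factor \<open>1/(s-1)\<close> is absorbed by \<open>\<beta>1\<close>. So \<open>\<alpha> = 2\<pi>\<^sup>2 + 4\<close> works, already for \<open>d \<le> 1/2\<close>.\<close>

lemma powr_diff_between:
  fixes s x :: real
  assumes s: "s > 1" and x: "x > 0"
  shows "(x+1) powr (-s) \<le> (x powr (1-s) - (x+1) powr (1-s)) / (s-1)"
    and "(x powr (1-s) - (x+1) powr (1-s)) / (s-1) \<le> x powr (-s)"
proof -
  have deriv: "((\<lambda>z. z powr (1-s)) has_real_derivative (1-s) * z powr (1-s-1)) (at z)"
    if "x \<le> z" "z \<le> x+1" for z
    using that x by (intro has_real_derivative_powr) auto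
  obtain z where z: "x < z" "z < x+1"
    and "(x+1) powr (1-s) - x powr (1-s) = (x+1-x) * ((1-s) * z powr (1-s-1))"
    using MVT2[of x "x+1" "\<lambda>z. z powr (1-s)", OF _ deriv] by auto
  then have mean: "(x powr (1-s) - (x+1) powr (1-s)) / (s-1) = z powr (-s)"
    using s by (simp add: field_simps)
  show "(x+1) powr (-s) \<le> (x powr (1-s) - (x+1) powr (1-s)) / (s-1)"
    unfolding mean using z x s by (intro powr_mono2') auto
  show "(x powr (1-s) - (x+1) powr (1-s)) / (s-1) \<le> x powr (-s)"
    unfolding mean using z x s by (intro powr_mono2') auto
qed

lemma summable_powr_shift:
  fixes s :: real
  assumes "s > 1"
  shows "summable (\<lambda>n. real (n + m) powr (-s))"
  using summable_ignore_initial_segment[of "\<lambda>n. real n powr (-s)" m] assms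
  by (simp add: summable_real_powr_iff)

lemma powr_telescope_sums:
  fixes s :: real
  assumes s: "s > 1"
  shows "(\<lambda>n. (real (n + m) powr (1-s) - real (Suc n + m) powr (1-s)) / (s-1))
           sums (real m powr (1-s) / (s-1))"
proof -
  have "LIM n sequentially. real m + real n :> at_top"
    by (rule filterlim_tendsto_add_at_top[OF tendsto_const filterlim_real_sequentially])
  then have "(\<lambda>n. real (n + m) powr (1-s)) \<longlonglongrightarrow> 0"
    using s by (intro tendsto_neg_powr) (auto simp: add.commute)
  from sums_divide[OF telescope_sums'[OF this], of "s-1"] show ?thesis
    by simp
qed

lemma zeta_real_eq_suminf: "zeta_real s = (\<Sum>k. real (Suc k) powr (-s))"
  unfolding zeta_real_def by (simp add: powr_minus_divide)

lemma zeta_real_ge: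
  fixes s :: real
  assumes s: "s > 1"
  shows "1 / (s-1) \<le> zeta_real s"
proof -
  have "(real (n + 1) powr (1-s) - real (Suc n + 1) powr (1-s)) / (s-1)
          \<le> real (Suc n) powr (-s)" for n
    using powr_diff_between(2)[OF s, of "real (Suc n)"] by (simp add: add.commute)
  moreover have "(\<lambda>k. real (Suc k) powr (-s)) sums zeta_real s"
    unfolding zeta_real_eq_suminf
    using summable_powr_shift[OF s, of 1] by (intro summable_sums) simp
  ultimately show ?thesis
    using sums_le[OF _ powr_telescope_sums[OF s, of 1]] by fastforce
qed

lemma powr_tail_le:
  fixes s :: real
  assumes s: "s > 1" and N: "N \<ge> 1"
  shows "(\<Sum>n. real (n + Suc N) powr (-s)) \<le> real N powr (1-s) / (s-1)"
proof -
  have "real (n + Suc N) powr (-s)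
          \<le> (real (n + N) powr (1-s) - real (Suc n + N) powr (1-s)) / (s-1)" for n
    using powr_diff_between(1)[OF s, of "real (n + N)"] N by (simp add: add.commute)
  from sums_le[OF this summable_sums[OF summable_powr_shift[OF s]] powr_telescope_sums[OF s]]
  show ?thesis .
qed

lemma one_minus_cos_le: "1 - cos x \<le> x\<^sup>2 / 2" for x :: real
proof -
  have "1 - cos x = 2 * sin (x/2) ^ 2"
    using cos_double_sin[of "x/2"] by simp
  also have "sin (x/2) ^ 2 \<le> (x/2) ^ 2"
    using abs_sin_x_le_abs_x[of "x/2"] abs_le_square_iff by blast
  finally show ?thesis by (simp add: power_divide)
qed

definition cos_defect :: "real \<Rightarrow> real \<Rightarrow> nat \<Rightarrow> real" where
  "cos_defect s d k = real (Suc k) powr (-s) * (1 - cos (2 * pi * real (Suc k) * d))"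

lemma cos_defect_nonneg: "0 \<le> cos_defect s d k"
  unfolding cos_defect_def by simp

lemma cos_defect_le: "cos_defect s d k \<le> 2 * real (Suc k) powr (-s)"
proof -
  have "1 - cos (2 * pi * real (Suc k) * d) \<le> 2"
    using cos_ge_minus_one[of "2 * pi * real (Suc k) * d"] by linarith
  then show ?thesis
    unfolding cos_defect_def by (metis mult.commute mult_left_mono powr_ge_zero)
qed

lemma cos_defect_le_quadratic:
  "cos_defect s d k \<le> 2 * pi\<^sup>2 * d\<^sup>2 * real (Suc k) powr (2-s)"
proof -
  let ?x = "real (Suc k)"
  have "cos_defect s d k \<le> ?x powr (-s) * ((2 * pi * ?x * d)\<^sup>2 / 2)"
    unfolding cos_defect_def by (intro mult_left_mono one_minus_cos_le) auto
  also have "\<dots> = 2 * pi\<^sup>2 * d\<^sup>2 * (?x powr (-s) * ?x powr 2)"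
    by (simp add: power_mult_distrib powr_numeral)
  also have "?x powr (-s) * ?x powr 2 = ?x powr (2-s)"
    using powr_add[of ?x "-s" 2] by simp
  finally show ?thesis .
qed

lemma summable_cos_defect:
  assumes "s > 1"
  shows "summable (cos_defect s d)"
proof (rule summable_comparison_test')
  show "summable (\<lambda>k. 2 * real (Suc k) powr (-s))"
    using summable_powr_shift[OF assms, of 1] by (intro summable_mult) simp
  show "norm (cos_defect s d k) \<le> 2 * real (Suc k) powr (-s)" for k
    using cos_defect_nonneg[of s d k] cos_defect_le[of s d k] by simp
qed

lemma cos_defect_head_le:
  assumes "s \<le> 2"
  shows "(\<Sum>k<N. cos_defect s d k) \<le> 2 * pi\<^sup>2 * d\<^sup>2 * real N powr (3-s)"
proof -
  define c where "c = 2 * pi\<^sup>2 * d\<^sup>2"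
  have "cos_defect s d k \<le> c * real N powr (2-s)" if "k < N" for k
  proof -
    have "real (Suc k) powr (2-s) \<le> real N powr (2-s)"
      using that assms by (intro powr_mono2) auto
    then have "c * real (Suc k) powr (2-s) \<le> c * real N powr (2-s)"
      unfolding c_def by (intro mult_left_mono) auto
    then show ?thesis
      using cos_defect_le_quadratic[of s d k] unfolding c_def by linarith
  qed
  then have "(\<Sum>k<N. cos_defect s d k) \<le> (\<Sum>k<N. c * real N powr (2-s))"
    by (intro sum_mono) simp
  also have "\<dots> = c * (real N * real N powr (2-s))"
    by simp
  also have "real N * real N powr (2-s) = real N powr (3-s)"
    using powr_add[of "real N" 1 "2-s"] by (cases "N = 0") simp_all
  finally show ?thesis
    unfolding c_def .
qed

lemma cos_defect_tail_le:
  assumes s: "s > 1" and N: "N \<ge> 1"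
  shows "(\<Sum>n. cos_defect s d (n + N)) \<le> 2 * real N powr (1-s) / (s-1)"
proof -
  have "(\<Sum>n. cos_defect s d (n + N)) \<le> (\<Sum>n. 2 * real (n + Suc N) powr (-s))"
  proof (rule suminf_le)
    show "cos_defect s d (n + N) \<le> 2 * real (n + Suc N) powr (-s)" for n
      using cos_defect_le[of s d "n + N"] by simp
    show "summable (\<lambda>n. cos_defect s d (n + N))"
      by (rule summable_ignore_initial_segment[OF summable_cos_defect[OF s]])
    show "summable (\<lambda>n. 2 * real (n + Suc N) powr (-s))"
      by (intro summable_mult summable_powr_shift[OF s])
  qed
  also have "\<dots> = 2 * (\<Sum>n. real (n + Suc N) powr (-s))"
    by (rule suminf_mult[OF summable_powr_shift[OF s]])
  also have "\<dots> \<le> 2 * real N powr (1-s) / (s-1)"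
    using powr_tail_le[OF s N] by simp
  finally show ?thesis .
qed

lemma inverse_scale_bounds:
  fixes d :: real
  assumes "0 < d" "d \<le> 1/2"
  obtains N :: nat where "N \<ge> 1" "1 / (2*d) \<le> real N" "real N \<le> 1/d"
proof
  have "2 \<le> 1/d" "1/(2*d) \<le> 1/d - 1" "1 \<le> 1/(2*d)"
    using assms by (simp_all add: field_simps)
  moreover have "0 \<le> \<lfloor>1/d\<rfloor>"
    using assms by simp
  then have "real (nat \<lfloor>1/d\<rfloor>) = of_int \<lfloor>1/d\<rfloor>"
    by simp
  ultimately show "1 / (2*d) \<le> real (nat \<lfloor>1/d\<rfloor>)" "real (nat \<lfloor>1/d\<rfloor>) \<le> 1/d"
    and "nat \<lfloor>1/d\<rfloor> \<ge> 1"
    by linarith+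
qed

lemma sq_mult_powr_le_if_le_inverse:
  fixes s d x :: real
  assumes "s \<le> 3" "0 < d" "0 < x" "x \<le> 1/d"
  shows "d\<^sup>2 * x powr (3-s) \<le> d powr (s-1)"
proof -
  have "x powr (3-s) \<le> (1/d) powr (3-s)"
    using assms by (intro powr_mono2) auto
  also have "(1/d) powr (3-s) = d powr (s-3)"
    using assms powr_minus_divide[of d "3-s"] by (simp add: powr_divide)
  finally have "d\<^sup>2 * x powr (3-s) \<le> d\<^sup>2 * d powr (s-3)"
    using assms by simp
  also have "\<dots> = d powr (s-1)"
    using assms powr_add[of d 2 "s-3"] by simp
  finally show ?thesis .
qed

lemma powr_one_minus_le_if_ge_half_inverse:
  fixes s d x :: real
  assumes "1 \<le> s" "s \<le> 2" "0 < d" "1/(2*d) \<le> x"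
  shows "x powr (1-s) \<le> 2 * d powr (s-1)"
proof -
  have "x powr (1-s) \<le> (1/(2*d)) powr (1-s)"
    using assms by (intro powr_mono2') auto
  also have "(1/(2*d)) powr (1-s) = (2*d) powr (s-1)"
    using assms powr_minus_divide[of "2*d" "1-s"] by (simp add: powr_divide)
  also have "\<dots> = 2 powr (s-1) * d powr (s-1)"
    using assms by (simp add: powr_mult)
  also have "\<dots> \<le> 2 * d powr (s-1)"
    using assms powr_mono[of "s-1" 1 2] by (intro mult_right_mono) auto
  finally show ?thesis .
qed

lemma weighted_cos_defect_le:
  assumes s: "1 < s" "s \<le> 2" and d: "0 \<le> d" "d \<le> 1/2"
    and b: "0 \<le> b" "b \<le> s - 1"
  shows "b * suminf (cos_defect s d) \<le> (2 * pi\<^sup>2 + 4) * d powr (s-1)"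
proof (cases "d = 0")
  case True
  then have "cos_defect s d = (\<lambda>_. 0)"
    by (simp add: cos_defect_def fun_eq_iff)
  with True show ?thesis
    by simp
next
  case False
  with d have "0 < d" by simp
  then obtain N :: nat where N: "N \<ge> 1" "1 / (2*d) \<le> real N" "real N \<le> 1/d"
    using d inverse_scale_bounds by blast
  have head: "b * (\<Sum>k<N. cos_defect s d k) \<le> 2 * pi\<^sup>2 * d powr (s-1)"
  proof -
    have "(\<Sum>k<N. cos_defect s d k) \<le> 2 * pi\<^sup>2 * d\<^sup>2 * real N powr (3-s)"
      by (rule cos_defect_head_le[OF s(2)])
    also have "\<dots> = 2 * pi\<^sup>2 * (d\<^sup>2 * real N powr (3-s))"
      by (simp only: mult.assoc)
    also have "\<dots> \<le> 2 * pi\<^sup>2 * d powr (s-1)"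
      using sq_mult_powr_le_if_le_inverse[of s d "real N"] s N \<open>0 < d\<close> by (intro mult_left_mono) auto
    moreover have "b * (\<Sum>k<N. cos_defect s d k) \<le> 1 * (\<Sum>k<N. cos_defect s d k)"
      using b s cos_defect_nonneg by (intro mult_right_mono sum_nonneg) auto
    ultimately show ?thesis
      by linarith
  qed
  have tail: "b * (\<Sum>n. cos_defect s d (n + N)) \<le> 4 * d powr (s-1)"
  proof -
    have "b * (\<Sum>n. cos_defect s d (n + N)) \<le> (s-1) * (2 * real N powr (1-s) / (s-1))"
      using b cos_defect_tail_le[OF s(1) N(1), of d] cos_defect_nonneg
        summable_ignore_initial_segment[OF summable_cos_defect[OF s(1)]]
      by (intro mult_mono suminf_nonneg) auto
    also have "\<dots> = 2 * real N powr (1-s)"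
      using s by simp
    also have "\<dots> \<le> 4 * d powr (s-1)"
      using powr_one_minus_le_if_ge_half_inverse[of s d "real N"] s N \<open>0 < d\<close> by simp
    finally show ?thesis .
  qed
  have "suminf (cos_defect s d) = (\<Sum>n. cos_defect s d (n + N)) + (\<Sum>k<N. cos_defect s d k)"
    by (rule suminf_split_initial_segment[OF summable_cos_defect[OF s(1)]])
  then have "b * suminf (cos_defect s d)
      = b * (\<Sum>n. cos_defect s d (n + N)) + b * (\<Sum>k<N. cos_defect s d k)"
    by (simp add: distrib_left)
  with head tail show ?thesis
    by (simp add: distrib_right)
qed

lemma dT_eq_abs_shift: "\<exists>m::int. dT x y = \<bar>x - y + of_int m\<bar>"
proof -
  have "{\<bar>x - y + of_int k\<bar> | k::int. k \<in> {-1, 0, 1}} = (\<lambda>k. \<bar>x - y + of_int k\<bar>) ` {-1, 0, 1}"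
    by blast
  then have "dT x y \<in> (\<lambda>k. \<bar>x - y + of_int k\<bar>) ` {-1, 0, 1::int}"
    unfolding dT_def by (metis (no_types, lifting) Min_in empty_not_insert finite.emptyI
        finite.insertI finite_imageI image_is_empty)
  then show ?thesis by blast
qed

lemma dT_nonneg: "0 \<le> dT x y"
  using dT_eq_abs_shift[of x y] by auto

lemma cos_2pi_mult_dT: "cos (2 * pi * real n * (x - y)) = cos (2 * pi * real n * dT x y)"
proof -
  obtain m :: int where m: "dT x y = \<bar>x - y + of_int m\<bar>"
    using dT_eq_abs_shift by blast
  define e where "e = x - y + of_int m"
  have "2 * pi * real n * (x - y) = 2 * pi * real n * e - 2 * pi * of_int (int n * m)"
    unfolding e_def by (simp add: algebra_simps)
  then have "cos (2 * pi * real n * (x - y)) = cos (2 * pi * real n * e)"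
    by (simp only: cos_diff cos_int_2pin sin_int_2pin)
  also have "\<dots> = cos (2 * pi * real n * \<bar>e\<bar>)"
  proof (cases "0 \<le> e")
    case False
    then have "2 * pi * real n * \<bar>e\<bar> = - (2 * pi * real n * e)"
      by simp
    then show ?thesis
      by (simp only: cos_minus)
  qed simp
  finally show ?thesis
    unfolding m e_def .
qed

lemma K1_diag: "K1 r \<beta>0 \<beta>1 x x = \<beta>0 + \<beta>1 * zeta_real (2*r)"
  unfolding K1_def zeta_real_eq_suminf by simp

lemma K1_eq_sub_cos_defect:
  assumes "1/2 < r"
  shows "K1 r \<beta>0 \<beta>1 x y = \<beta>0 + \<beta>1 * zeta_real (2*r) - \<beta>1 * suminf (cos_defect (2*r) (dT x y))"
proof -
  have s: "2*r > 1" using assms by simp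
  have "(\<lambda>k. real (Suc k) powr (-2*r) * cos (2 * pi * real (Suc k) * (x - y)))
      = (\<lambda>k. real (Suc k) powr (-(2*r)) - cos_defect (2*r) (dT x y) k)"
    by (simp only: cos_2pi_mult_dT) (simp add: cos_defect_def fun_eq_iff algebra_simps)
  then have "(\<Sum>k. real (Suc k) powr (-2*r) * cos (2 * pi * real (Suc k) * (x - y)))
      = (\<Sum>k. real (Suc k) powr (-(2*r)) - cos_defect (2*r) (dT x y) k)"
    by (rule arg_cong)
  also have "\<dots> = zeta_real (2*r) - suminf (cos_defect (2*r) (dT x y))"
    unfolding zeta_real_eq_suminf
    using summable_powr_shift[OF s, of 1] summable_cos_defect[OF s]
    by (intro suminf_diff[symmetric]) simp_all
  finally show ?thesis
    unfolding K1_def by (simp add: right_diff_distrib)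
qed

lemma korobov_weight_less:
  assumes "1 < s" "0 < \<beta>0" "\<beta>0 + \<beta>1 * zeta_real s = 1"
  shows "\<beta>1 < s - 1"
proof (cases "\<beta>1 \<le> 0")
  case False
  then have "\<beta>1 * (1 / (s-1)) \<le> \<beta>1 * zeta_real s"
    using zeta_real_ge[OF assms(1)] by (intro mult_left_mono) auto
  also have "\<dots> < 1"
    using assms(2,3) by linarith
  finally show ?thesis
    using assms(1) by (simp add: divide_less_eq)
qed (use assms in simp)

lemma K1_lower_bound:
  assumes r: "1/2 < r" "r \<le> 1" and \<beta>: "0 < \<beta>0" "0 \<le> \<beta>1" "\<beta>0 + \<beta>1 * zeta_real (2*r) = 1"
    and d: "dT x y \<le> 1/2"
  shows "1 - (2 * pi\<^sup>2 + 4) * dT x y powr (2*r - 1) \<le> K1 r \<beta>0 \<beta>1 x y"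
proof -
  have "\<beta>1 < 2*r - 1"
    using r \<beta> korobov_weight_less[of "2*r" \<beta>0 \<beta>1] by simp
  then have "\<beta>1 * suminf (cos_defect (2*r) (dT x y)) \<le> (2 * pi\<^sup>2 + 4) * dT x y powr (2*r - 1)"
    using r \<beta> d dT_nonneg[of x y] by (intro weighted_cos_defect_le) linarith+
  then show ?thesis
    using r \<beta> K1_eq_sub_cos_defect[of r \<beta>0 \<beta>1 x y] by linarith
qed

theorem lemma3p5:
  "\<exists>\<alpha>::real. \<alpha> > 0 \<and>
     (\<forall>r \<beta>0 \<beta>1::real. 1/2 < r \<and> r \<le> 1 \<and> \<beta>0 > 0 \<and> \<beta>1 > 0 \<and>
        \<beta>0 + \<beta>1 * zeta_real (2*r) = 1 \<longrightarrow>
        (\<forall>x\<in>torus. K1 r \<beta>0 \<beta>1 x x = 1) \<and>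
        (\<forall>x\<in>torus. \<forall>y\<in>torus. dT x y \<le> 1 / (sqrt 2 * pi) \<longrightarrow>
            K1 r \<beta>0 \<beta>1 x y \<ge> 1 - \<alpha> * dT x y powr (2*r - 1)))"
proof (intro exI[of _ "2 * pi\<^sup>2 + 4"] conjI allI impI ballI)
  show "0 < 2 * pi\<^sup>2 + (4::real)"
    by (simp add: add_pos_pos)
  fix r \<beta>0 \<beta>1 x y :: real
  assume hyps: "1/2 < r \<and> r \<le> 1 \<and> \<beta>0 > 0 \<and> \<beta>1 > 0 \<and> \<beta>0 + \<beta>1 * zeta_real (2*r) = 1"
  then show "K1 r \<beta>0 \<beta>1 x x = 1"
    by (simp add: K1_diag)
  have "1 * 3 \<le> sqrt 2 * pi"
    using pi_gt3 by (intro mult_mono) auto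
  then have "1 / (sqrt 2 * pi) \<le> 1/2"
    by (simp add: field_simps)
  moreover assume "dT x y \<le> 1 / (sqrt 2 * pi)"
  ultimately have "dT x y \<le> 1/2"
    by linarith
  with hyps show "1 - (2 * pi\<^sup>2 + 4) * dT x y powr (2*r - 1) \<le> K1 r \<beta>0 \<beta>1 x y"
    by (intro K1_lower_bound) auto
qed

end
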